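(* Let $n\ge 2$ and let $$A=\begin{bmatrix}0&a_{12}&\mathbf 0^T\\ a_{21}&0&\mathbf y^T\\ \mathbf x&\mathbf 0&R\end{bmatrix}$$ be a real $n\times n$ matrix, where $a_{12},a_{21}\in\mathbb R$ with $a_{12}\neq0$, $\mathbf x,\mathbf y\in\mathbb R^{n-2}$ and $R$ is a real $(n-2)\times(n-2)$ matrix. If $\lambda$ is a simple eigenvalue of $A$ such that $A\mathbf u=\lambda\mathbf u$ and $\mathbf v^TA=\lambda\mathbf v^T$ for some entrywise positive $\mathbf u,\mathbf v\in\mathbb R^n$, then $\lambda$ is a simple eigenvalue of the $(n-1)\times(n-1)$ matrix $$B=\begin{bmatrix}\lambda+a_{21}-\frac{\lambda^2}{a_{12}}&\mathbf y^T\\ \mathbf x&R\end{bmatrix}.$$ Moreover, $B\mathbf w=\lambda\mathbf w$ and $\mathbf z^TB=\lambda\mathbf z^T$, where $w_1=u_1$, $z_1=v_2$, and $w_i=u_{i+1}$, $z_i=v_{i+1}$ for $i\ge 2$.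
   Context: A simple eigenvalue is one of algebraic multiplicity one; $\mathbf 0$ denotes a zero column vector of appropriate size. *)

theory Defs
  imports "Jordan_Normal_Form.Char_Poly"
begin

definition simple_eigenvalue :: "real mat \<Rightarrow> real \<Rightarrow> bool" where
  "simple_eigenvalue M lam \<longleftrightarrow> order lam (char_poly M) = 1"

text \<open>The n x n block matrix [[0, a12, 0^T], [a21, 0, y^T], [x, 0, R]]
  (indices start at 0).\<close>
definition blockA :: "nat \<Rightarrow> real \<Rightarrow> real \<Rightarrow> real vec \<Rightarrow> real vec \<Rightarrow> real mat \<Rightarrow> real mat" where
  "blockA n a12 a21 x y R = mat n n (\<lambda>(i,j).
     if i = 0 then (if j = 1 then a12 else 0)
     else if i = 1 then (if j = 0 then a21 else if j = 1 then 0 else y $ (j - 2))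
     else (if j = 0 then x $ (i - 2) else if j = 1 then 0 else R $$ (i - 2, j - 2)))"

definition blockB :: "nat \<Rightarrow> real \<Rightarrow> real \<Rightarrow> real \<Rightarrow> real vec \<Rightarrow> real vec \<Rightarrow> real mat \<Rightarrow> real mat" where
  "blockB n lam a12 a21 x y R = mat (n - 1) (n - 1) (\<lambda>(i,j).
     if i = 0 then (if j = 0 then lam + a21 - lam^2 / a12 else y $ (j - 1))
     else (if j = 0 then x $ (i - 1) else R $$ (i - 1, j - 1)))"

end

theory Submission
  imports Defs
begin

text \<open>A right eigenvector \<open>(a, b, t)\<close> of \<open>A\<close> for \<open>lam\<close> satisfies \<open>a12 b = lam a\<close>;
  substituting \<open>b = lam a / a12\<close> into the second row shows that \<open>(a, t)\<close> is an eigenvector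
  of \<open>B\<close>, and conversely every eigenvector of \<open>B\<close> lifts in this way to one of \<open>A\<close>. So
  \<open>lam\<close> has geometric multiplicity one for \<open>B\<close> because it has for \<open>A\<close>. Swapping the first two
  coordinates turns \<open>A\<^sup>T\<close> into a matrix of the same shape (with \<open>x\<close>, \<open>y\<close> exchanged
  and \<open>R\<close> transposed), which yields the left eigenvector of \<open>B\<close>.

  It remains to see that an eigenvalue of geometric multiplicity one is algebraically simple
  when it has right and left eigenvectors \<open>w\<close>, \<open>z\<close> with \<open>z \<bullet> w \<noteq> 0\<close> (here both are
  positive). A change of basis sending \<open>w\<close> to \<open>e\<^sub>0\<close> makes the matrix block triangular with
  diagonal blocks \<open>lam\<close> and \<open>M'\<close>, so \<open>lam\<close> is simple iff it is not an eigenvalue of \<open>M'\<close>, i.e.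
  iff there is no \<open>x \<notin> span {w}\<close> with \<open>(M - lam) x \<in> span {w}\<close>. Pairing with \<open>z\<close> kills the
  component along \<open>w\<close>, so such an \<open>x\<close> would be a second eigenvector.\<close>

lemma smult_vCons [simp]: "c \<cdot>\<^sub>v vCons a v = vCons (c * a) (c \<cdot>\<^sub>v v)"
  by (rule eq_vecI) (auto simp: vec_index_vCons)

lemma add_vCons [simp]:
  "dim_vec v = dim_vec w \<Longrightarrow> vCons a v + vCons b w = vCons (a + b) (v + w)"
  by (rule eq_vecI) (auto simp: vec_index_vCons)

lemma smult_unit_vec_0: "(c :: 'a :: semiring_1) \<cdot>\<^sub>v unit_vec (Suc m) 0 = vCons c (0\<^sub>v m)"
  by (rule eq_vecI) (auto simp: vec_index_vCons)

lemma vCons_head_tail: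
  assumes "x \<in> carrier_vec (Suc m)"
  shows "x = vCons (x $ 0) (vec m (\<lambda>i. x $ Suc i))"
  using assms by (intro eq_vecI) (auto simp: vec_index_vCons)

lemma row_eq_vCons:
  assumes "M \<in> carrier_mat r (Suc m)" "i < r"
  shows "row M i = vCons (M $$ (i, 0)) (vec m (\<lambda>j. M $$ (i, Suc j)))"
  using assms by (intro eq_vecI) (auto simp: vec_index_vCons)

section \<open>Simple eigenvalues via an eigenvector\<close>

lemma col_0_of_unit_vec_eigen:
  fixes C :: "'a :: semiring_1 mat"
  assumes "C \<in> carrier_mat n n" "C *\<^sub>v unit_vec n 0 = lam \<cdot>\<^sub>v unit_vec n 0" "i < n"
  shows "C $$ (i, 0) = (if i = 0 then lam else 0)"
proof -
  have "C $$ (i, 0) = (C *\<^sub>v unit_vec n 0) $ i"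
    using assms(1,3) scalar_prod_right_unit[of 0 n "row C i"] by simp
  then show ?thesis
    using assms by simp
qed

lemma mult_vCons_of_unit_vec_eigen:
  fixes C :: "'a :: semiring_1 mat"
  assumes C: "C \<in> carrier_mat (Suc m) (Suc m)"
    and C0: "C *\<^sub>v unit_vec (Suc m) 0 = lam \<cdot>\<^sub>v unit_vec (Suc m) 0"
    and t: "t \<in> carrier_vec m"
  shows "C *\<^sub>v vCons a t
    = vCons (lam * a + vec m (\<lambda>j. C $$ (0, Suc j)) \<bullet> t) (mat_delete C 0 0 *\<^sub>v t)"
proof (rule eq_vecI)
  fix i assume "i < dim_vec (vCons (lam * a + vec m (\<lambda>j. C $$ (0, Suc j)) \<bullet> t) (mat_delete C 0 0 *\<^sub>v t))"
  then have i: "i < Suc m"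
    using C by (simp add: mat_delete_def)
  have row_delete: "row (mat_delete C 0 0) j = vec m (\<lambda>l. C $$ (Suc j, Suc l))" if "j < m" for j
    using C that by (intro eq_vecI) (auto simp: mat_delete_def)
  show "(C *\<^sub>v vCons a t) $ i
    = vCons (lam * a + vec m (\<lambda>j. C $$ (0, Suc j)) \<bullet> t) (mat_delete C 0 0 *\<^sub>v t) $ i"
    using i C t col_0_of_unit_vec_eigen[OF C C0 i]
    by (cases i) (auto simp: row_eq_vCons[OF C] row_delete mat_delete_def)
qed (use C in \<open>simp add: mat_delete_def\<close>)

lemma order_char_poly_of_unit_vec_eigen:
  fixes C :: "'a :: field mat"
  assumes C: "C \<in> carrier_mat (Suc m) (Suc m)"
    and C0: "C *\<^sub>v unit_vec (Suc m) 0 = lam \<cdot>\<^sub>v unit_vec (Suc m) 0"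
  shows "order lam (char_poly C) = 1 \<longleftrightarrow> \<not> eigenvalue (mat_delete C 0 0) lam"
proof -
  define C' where "C' = mat_delete C 0 0"
  have C': "C' \<in> carrier_mat m m"
    using C by (simp add: C'_def mat_delete_def)
  have blocks: "C = four_block_mat (mat 1 1 (\<lambda>_. lam)) (mat 1 m (\<lambda>(_, j). C $$ (0, Suc j)))
      (0\<^sub>m m 1) C'"
    using C col_0_of_unit_vec_eigen[OF C C0]
    by (intro eq_matI) (auto simp: C'_def mat_delete_def)
  have "char_poly C = char_poly (mat 1 1 (\<lambda>_. lam)) * char_poly C'"
    by (subst blocks, rule char_poly_four_block_zeros_col[OF _ _ C']) auto
  also have "char_poly (mat 1 1 (\<lambda>_. lam)) = [:- lam, 1:]"
    by (simp add: char_poly_defs det_single)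
  finally have char_poly_C: "char_poly C = [:- lam, 1:] * char_poly C'" .
  have "char_poly C' \<noteq> 0"
    using degree_monic_char_poly[OF C'] by auto
  then have "order lam (char_poly C) = order lam [:- lam, 1:] + order lam (char_poly C')"
    unfolding char_poly_C by (intro order_mult) (simp del: mult_pCons_left)
  also have "order lam [:- lam, 1:] = 1"
    using order_linear_power[of lam 1] by simp
  finally have "order lam (char_poly C) = 1 + order lam (char_poly C')" .
  with \<open>char_poly C' \<noteq> 0\<close> show ?thesis
    unfolding C'_def[symmetric] eigenvalue_root_char_poly[OF C'] by (simp add: order_root)
qed

text \<open>For an eigenvector \<open>w\<close> this says \<open>ker (M - lam)\<^sup>2 \<subseteq> span {w}\<close>, which forces the
  whole generalized eigenspace of \<open>lam\<close> to be spanned by \<open>w\<close>.\<close>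
definition spans_gen_eigenspace :: "'a :: field vec \<Rightarrow> 'a mat \<Rightarrow> 'a \<Rightarrow> bool" where
  "spans_gen_eigenspace w M lam \<longleftrightarrow>
    (\<forall>x \<in> carrier_vec (dim_col M). \<forall>d. M *\<^sub>v x = lam \<cdot>\<^sub>v x + d \<cdot>\<^sub>v w \<longrightarrow> (\<exists>c. x = c \<cdot>\<^sub>v w))"

lemma spans_gen_eigenspace_unit_vec_iff:
  fixes C :: "'a :: field mat"
  assumes C: "C \<in> carrier_mat (Suc m) (Suc m)"
    and C0: "C *\<^sub>v unit_vec (Suc m) 0 = lam \<cdot>\<^sub>v unit_vec (Suc m) 0"
  shows "spans_gen_eigenspace (unit_vec (Suc m) 0) C lam \<longleftrightarrow> \<not> eigenvalue (mat_delete C 0 0) lam"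
proof -
  define C' where "C' = mat_delete C 0 0"
  have C': "C' \<in> carrier_mat m m"
    using C by (simp add: C'_def mat_delete_def)
  note mult_vCons = mult_vCons_of_unit_vec_eigen[OF C C0, folded C'_def]
  show ?thesis
    unfolding C'_def[symmetric]
  proof
    assume span: "spans_gen_eigenspace (unit_vec (Suc m) 0) C lam"
    show "\<not> eigenvalue C' lam"
    proof
      assume "eigenvalue C' lam"
      then obtain t where t: "t \<in> carrier_vec m" "t \<noteq> 0\<^sub>v m" "C' *\<^sub>v t = lam \<cdot>\<^sub>v t"
        using C' unfolding eigenvalue_def eigenvector_def by auto
      have "C *\<^sub>v vCons 0 t = lam \<cdot>\<^sub>v vCons 0 t
          + (vec m (\<lambda>j. C $$ (0, Suc j)) \<bullet> t) \<cdot>\<^sub>v unit_vec (Suc m) 0"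
        using t by (simp add: mult_vCons smult_unit_vec_0)
      then obtain c where "vCons 0 t = c \<cdot>\<^sub>v unit_vec (Suc m) 0"
        using span t C unfolding spans_gen_eigenspace_def by fastforce
      with t show False
        by (simp add: smult_unit_vec_0)
    qed
  next
    assume no_eigenvalue: "\<not> eigenvalue C' lam"
    show "spans_gen_eigenspace (unit_vec (Suc m) 0) C lam"
      unfolding spans_gen_eigenspace_def
    proof (intro ballI allI impI)
      fix x d
      assume x: "x \<in> carrier_vec (dim_col C)" and eq: "C *\<^sub>v x = lam \<cdot>\<^sub>v x + d \<cdot>\<^sub>v unit_vec (Suc m) 0"
      define t where "t = vec m (\<lambda>i. x $ Suc i)"
      have t: "t \<in> carrier_vec m" and x_split: "x = vCons (x $ 0) t"
        using vCons_head_tail[of x m] x C by (auto simp: t_def)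
      have "C *\<^sub>v vCons (x $ 0) t = lam \<cdot>\<^sub>v vCons (x $ 0) t + d \<cdot>\<^sub>v unit_vec (Suc m) 0"
        using eq unfolding x_split[symmetric] .
      then have "C' *\<^sub>v t = lam \<cdot>\<^sub>v t"
        using t by (simp add: mult_vCons smult_unit_vec_0)
      then have "t = 0\<^sub>v m"
        using no_eigenvalue t C' unfolding eigenvalue_def eigenvector_def by auto
      then have "x = x $ 0 \<cdot>\<^sub>v unit_vec (Suc m) 0"
        using x_split by (simp add: smult_unit_vec_0)
      then show "\<exists>c. x = c \<cdot>\<^sub>v unit_vec (Suc m) 0" ..
    qed
  qed
qed

lemma spans_gen_eigenspace_similar:
  fixes M :: "'a :: field mat"
  assumes sim: "similar_mat_wit M C P Q" and M: "M \<in> carrier_mat n n" and e: "e \<in> carrier_vec n"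
    and span: "spans_gen_eigenspace (P *\<^sub>v e) M lam"
  shows "spans_gen_eigenspace e C lam"
  unfolding spans_gen_eigenspace_def
proof (intro ballI allI impI)
  from similar_mat_witD2[OF M sim] have QP: "Q * P = 1\<^sub>m n" and M_eq: "M = P * C * Q"
    and C: "C \<in> carrier_mat n n" and P: "P \<in> carrier_mat n n" and Q: "Q \<in> carrier_mat n n"
    by auto
  have MP: "M * P = P * C"
  proof -
    have "M * P = P * C * (Q * P)"
      unfolding M_eq using P C Q by (simp add: assoc_mult_mat[of _ n n _ n _ n])
    then show ?thesis
      using P C QP by simp
  qed
  have QP_vec: "Q *\<^sub>v (P *\<^sub>v v) = v" if "v \<in> carrier_vec n" for v
    using assoc_mult_mat_vec[OF Q P that, symmetric] QP that by simp
  fix y d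
  assume y: "y \<in> carrier_vec (dim_col C)" and Cy: "C *\<^sub>v y = lam \<cdot>\<^sub>v y + d \<cdot>\<^sub>v e"
  then have y: "y \<in> carrier_vec n"
    using C by simp
  have "M *\<^sub>v (P *\<^sub>v y) = (M * P) *\<^sub>v y"
    using M P y by simp
  also have "\<dots> = P *\<^sub>v (C *\<^sub>v y)"
    unfolding MP using P C y by simp
  also have "\<dots> = lam \<cdot>\<^sub>v (P *\<^sub>v y) + d \<cdot>\<^sub>v (P *\<^sub>v e)"
    unfolding Cy using P y e by (simp add: mult_add_distrib_mat_vec mult_mat_vec)
  finally obtain c where "P *\<^sub>v y = c \<cdot>\<^sub>v (P *\<^sub>v e)"
    using span P y M unfolding spans_gen_eigenspace_def by fastforce
  then have "Q *\<^sub>v (P *\<^sub>v y) = c \<cdot>\<^sub>v (Q *\<^sub>v (P *\<^sub>v e))"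
    using Q P e by (simp add: mult_mat_vec)
  then show "\<exists>c. y = c \<cdot>\<^sub>v e"
    using QP_vec y e by auto
qed

lemma spans_gen_eigenspace_similar_iff:
  fixes M :: "'a :: field mat"
  assumes sim: "similar_mat_wit M C P Q" and M: "M \<in> carrier_mat n n" and e: "e \<in> carrier_vec n"
  shows "spans_gen_eigenspace (P *\<^sub>v e) M lam \<longleftrightarrow> spans_gen_eigenspace e C lam"
proof
  show "spans_gen_eigenspace e C lam" if "spans_gen_eigenspace (P *\<^sub>v e) M lam"
    using spans_gen_eigenspace_similar[OF sim M e that] .
next
  from similar_mat_witD2[OF M sim] have QP: "Q * P = 1\<^sub>m n"
    and C: "C \<in> carrier_mat n n" and P: "P \<in> carrier_mat n n" and Q: "Q \<in> carrier_mat n n"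
    by auto
  have "Q *\<^sub>v (P *\<^sub>v e) = e"
    using assoc_mult_mat_vec[OF Q P e, symmetric] QP e by simp
  moreover assume "spans_gen_eigenspace e C lam"
  ultimately show "spans_gen_eigenspace (P *\<^sub>v e) M lam"
    using spans_gen_eigenspace_similar[OF similar_mat_wit_sym[OF sim] C, of "P *\<^sub>v e"] P e by simp
qed

lemma similar_unit_vec_eigen:
  fixes M :: "'a :: field mat"
  assumes M: "M \<in> carrier_mat (Suc m) (Suc m)" and w: "w \<in> carrier_vec (Suc m)" "w $ 0 \<noteq> 0"
    and Mw: "M *\<^sub>v w = lam \<cdot>\<^sub>v w"
  obtains P Q C where "similar_mat_wit M C P Q" "P *\<^sub>v unit_vec (Suc m) 0 = w"
    "C *\<^sub>v unit_vec (Suc m) 0 = lam \<cdot>\<^sub>v unit_vec (Suc m) 0"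
proof -
  define P where "P = mat (Suc m) (Suc m) (\<lambda>(i, j). if j = 0 then w $ i else if i = j then 1 else 0)"
  have P: "P \<in> carrier_mat (Suc m) (Suc m)"
    by (simp add: P_def)
  have "det P = w $ 0"
    unfolding P_def
    by (subst det_lower_triangular[of "Suc m"])
      (auto simp: diag_mat_def prod.distinct_set_conv_list[symmetric]
        atLeastLessThanSuc_atLeastAtMost[symmetric] prod.atLeast_Suc_lessThan)
  then obtain Q where Q: "Q \<in> carrier_mat (Suc m) (Suc m)"
    and QP: "Q * P = 1\<^sub>m (Suc m)" and PQ: "P * Q = 1\<^sub>m (Suc m)"
    using det_non_zero_imp_unit[OF P, of "()"] w unfolding Units_def ring_mat_def by auto
  define C where "C = Q * M * P"
  have "P * C * Q = (P * Q) * M * (P * Q)"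
    unfolding C_def using P Q M by (simp add: assoc_mult_mat[of _ "Suc m" "Suc m" _ "Suc m" _ "Suc m"])
  then have sim: "similar_mat_wit M C P Q"
    using P Q M PQ QP by (intro similar_mat_witI) (auto simp: C_def)
  have Pe: "P *\<^sub>v unit_vec (Suc m) 0 = w"
    using w scalar_prod_right_unit[of 0 "Suc m"] by (intro eq_vecI) (auto simp: P_def)
  have "C *\<^sub>v unit_vec (Suc m) 0 = (Q * M) *\<^sub>v (P *\<^sub>v unit_vec (Suc m) 0)"
    unfolding C_def by (rule assoc_mult_mat_vec[OF mult_carrier_mat[OF Q M] P unit_vec_carrier])
  also have "\<dots> = Q *\<^sub>v (M *\<^sub>v (P *\<^sub>v unit_vec (Suc m) 0))"
    using Q M P by simp
  also have "\<dots> = lam \<cdot>\<^sub>v ((Q * P) *\<^sub>v unit_vec (Suc m) 0)"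
    using Q P w by (simp add: Pe Mw mult_mat_vec)
  finally show thesis
    using that[OF sim Pe] QP by simp
qed

lemma order_char_poly_eq_1_iff_spans_gen_eigenspace:
  fixes M :: "'a :: field mat"
  assumes M: "M \<in> carrier_mat (Suc m) (Suc m)" and w: "w \<in> carrier_vec (Suc m)" "w $ 0 \<noteq> 0"
    and Mw: "M *\<^sub>v w = lam \<cdot>\<^sub>v w"
  shows "order lam (char_poly M) = 1 \<longleftrightarrow> spans_gen_eigenspace w M lam"
proof -
  obtain P Q C where sim: "similar_mat_wit M C P Q" and Pe: "P *\<^sub>v unit_vec (Suc m) 0 = w"
    and Ce: "C *\<^sub>v unit_vec (Suc m) 0 = lam \<cdot>\<^sub>v unit_vec (Suc m) 0"
    using similar_unit_vec_eigen[OF assms] .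
  have C: "C \<in> carrier_mat (Suc m) (Suc m)"
    using similar_mat_witD2[OF M sim] by auto
  have "char_poly M = char_poly C"
    using sim by (intro char_poly_similar) (auto simp: similar_mat_def)
  then have "order lam (char_poly M) = 1 \<longleftrightarrow> \<not> eigenvalue (mat_delete C 0 0) lam"
    using order_char_poly_of_unit_vec_eigen[OF C Ce] by simp
  also have "\<dots> \<longleftrightarrow> spans_gen_eigenspace (unit_vec (Suc m) 0) C lam"
    using spans_gen_eigenspace_unit_vec_iff[OF C Ce] by simp
  also have "\<dots> \<longleftrightarrow> spans_gen_eigenspace w M lam"
    using spans_gen_eigenspace_similar_iff[OF sim M unit_vec_carrier[of "Suc m" 0]] Pe by simp
  finally show ?thesis .
qed

lemma eigenvector_in_span_if_order_1:
  fixes M :: "'a :: field mat"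
  assumes M: "M \<in> carrier_mat (Suc m) (Suc m)" and w: "w \<in> carrier_vec (Suc m)" "w $ 0 \<noteq> 0"
    and Mw: "M *\<^sub>v w = lam \<cdot>\<^sub>v w" and simple: "order lam (char_poly M) = 1"
    and q: "q \<in> carrier_vec (Suc m)" and Mq: "M *\<^sub>v q = lam \<cdot>\<^sub>v q"
  shows "\<exists>c. q = c \<cdot>\<^sub>v w"
proof -
  have "M *\<^sub>v q = lam \<cdot>\<^sub>v q + 0 \<cdot>\<^sub>v w"
    using Mq q w by (intro eq_vecI) auto
  then show ?thesis
    using simple q M unfolding order_char_poly_eq_1_iff_spans_gen_eigenspace[OF M w Mw]
      spans_gen_eigenspace_def by auto
qed

lemma order_char_poly_eq_1I:
  fixes M :: "'a :: field mat"
  assumes M: "M \<in> carrier_mat (Suc m) (Suc m)" and w: "w \<in> carrier_vec (Suc m)" "w $ 0 \<noteq> 0"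
    and Mw: "M *\<^sub>v w = lam \<cdot>\<^sub>v w"
    and z: "z \<in> carrier_vec (Suc m)" and Mz: "transpose_mat M *\<^sub>v z = lam \<cdot>\<^sub>v z"
    and zw: "z \<bullet> w \<noteq> 0"
    and unique: "\<And>q. q \<in> carrier_vec (Suc m) \<Longrightarrow> M *\<^sub>v q = lam \<cdot>\<^sub>v q \<Longrightarrow> \<exists>c. q = c \<cdot>\<^sub>v w"
  shows "order lam (char_poly M) = 1"
  unfolding order_char_poly_eq_1_iff_spans_gen_eigenspace[OF M w Mw] spans_gen_eigenspace_def
proof (intro ballI allI impI)
  fix x d
  assume x: "x \<in> carrier_vec (dim_col M)" and Mx: "M *\<^sub>v x = lam \<cdot>\<^sub>v x + d \<cdot>\<^sub>v w"
  then have x: "x \<in> carrier_vec (Suc m)"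
    using M by simp
  have "lam * (z \<bullet> x) = z \<bullet> (M *\<^sub>v x)"
    using transpose_vec_mult_scalar[OF M x z] Mz z x by simp
  also have "\<dots> = lam * (z \<bullet> x) + d * (z \<bullet> w)"
    unfolding Mx using z x w by (simp add: scalar_prod_add_distrib[of _ "Suc m"])
  finally have "d = 0"
    using zw by simp
  then have "M *\<^sub>v x = lam \<cdot>\<^sub>v x"
    using Mx x w by (intro eq_vecI) (auto simp: Mx)
  then show "\<exists>c. x = c \<cdot>\<^sub>v w"
    using unique x by blast
qed

section \<open>The block matrices\<close>

lemma mat_mult_vec_vCons:
  assumes "t \<in> carrier_vec m"
  shows "mat r (Suc m) f *\<^sub>v vCons a t = vec r (\<lambda>i. f (i, 0) * a + vec m (\<lambda>j. f (i, Suc j)) \<bullet> t)"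
  using assms by (intro eq_vecI) (auto simp: vec_Suc o_def)

lemma transpose_mat_mat: "transpose_mat (mat r c f) = mat c r (\<lambda>(i, j). f (j, i))"
  by (intro eq_matI) auto

lemma blockA_mult_vCons:
  assumes x: "x \<in> carrier_vec k" and y: "y \<in> carrier_vec k" and R: "R \<in> carrier_mat k k"
    and t: "t \<in> carrier_vec k"
  shows "blockA (Suc (Suc k)) a12 a21 x y R *\<^sub>v vCons a (vCons b t)
    = vCons (a12 * b) (vCons (a21 * a + y \<bullet> t) (a \<cdot>\<^sub>v x + R *\<^sub>v t))"
proof (rule eq_vecI)
  have y_vec: "vec k (($) y) = y"
    using y by auto
  have zero: "vec k (\<lambda>_. 0) \<bullet> t = 0"
    using t by (simp add: scalar_prod_def)
  fix i
  assume "i < dim_vec (vCons (a12 * b) (vCons (a21 * a + y \<bullet> t) (a \<cdot>\<^sub>v x + R *\<^sub>v t)))"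
  then consider "i = 0" | "i = 1" | j where "i = Suc (Suc j)" "j < k"
    using x R by (cases i; cases "i - 1") auto
  then show "(blockA (Suc (Suc k)) a12 a21 x y R *\<^sub>v vCons a (vCons b t)) $ i
    = vCons (a12 * b) (vCons (a21 * a + y \<bullet> t) (a \<cdot>\<^sub>v x + R *\<^sub>v t)) $ i"
    by cases (use x R t in \<open>auto simp: blockA_def mat_mult_vec_vCons vec_Suc o_def y_vec zero row_def\<close>)
qed (use R in \<open>simp add: blockA_def\<close>)

lemma transpose_blockA_mult_vCons:
  assumes x: "x \<in> carrier_vec k" and y: "y \<in> carrier_vec k" and R: "R \<in> carrier_mat k k"
    and t: "t \<in> carrier_vec k"
  shows "transpose_mat (blockA (Suc (Suc k)) a12 a21 x y R) *\<^sub>v vCons a (vCons b t)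
    = vCons (a21 * b + x \<bullet> t) (vCons (a12 * a) (b \<cdot>\<^sub>v y + transpose_mat R *\<^sub>v t))"
proof (rule eq_vecI)
  have x_vec: "vec k (($) x) = x"
    using x by auto
  have zero: "vec k (\<lambda>_. 0) \<bullet> t = 0"
    using t by (simp add: scalar_prod_def)
  fix i
  assume "i < dim_vec (vCons (a21 * b + x \<bullet> t) (vCons (a12 * a) (b \<cdot>\<^sub>v y + transpose_mat R *\<^sub>v t)))"
  then consider "i = 0" | "i = 1" | j where "i = Suc (Suc j)" "j < k"
    using y R by (cases i; cases "i - 1") auto
  then show "(transpose_mat (blockA (Suc (Suc k)) a12 a21 x y R) *\<^sub>v vCons a (vCons b t)) $ i
    = vCons (a21 * b + x \<bullet> t) (vCons (a12 * a) (b \<cdot>\<^sub>v y + transpose_mat R *\<^sub>v t)) $ i"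
    by cases (use y R t in \<open>auto simp: blockA_def transpose_mat_mat mat_mult_vec_vCons vec_Suc o_def x_vec zero col_def\<close>)
qed (use R in \<open>simp add: blockA_def\<close>)

lemma blockB_mult_vCons:
  assumes x: "x \<in> carrier_vec k" and y: "y \<in> carrier_vec k" and R: "R \<in> carrier_mat k k"
    and t: "t \<in> carrier_vec k"
  shows "blockB (Suc (Suc k)) lam a12 a21 x y R *\<^sub>v vCons a t
    = vCons ((lam + a21 - lam\<^sup>2 / a12) * a + y \<bullet> t) (a \<cdot>\<^sub>v x + R *\<^sub>v t)"
proof (rule eq_vecI)
  have y_vec: "vec k (($) y) = y"
    using y by auto
  fix i
  assume "i < dim_vec (vCons ((lam + a21 - lam\<^sup>2 / a12) * a + y \<bullet> t) (a \<cdot>\<^sub>v x + R *\<^sub>v t))"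
  then show "(blockB (Suc (Suc k)) lam a12 a21 x y R *\<^sub>v vCons a t) $ i
    = vCons ((lam + a21 - lam\<^sup>2 / a12) * a + y \<bullet> t) (a \<cdot>\<^sub>v x + R *\<^sub>v t) $ i"
    using x R t by (cases i) (auto simp: blockB_def mat_mult_vec_vCons y_vec row_def)
qed (use R in \<open>simp add: blockB_def\<close>)

lemma transpose_blockB:
  assumes "R \<in> carrier_mat (n - 2) (n - 2)"
  shows "transpose_mat (blockB n lam a12 a21 x y R) = blockB n lam a12 a21 y x (transpose_mat R)"
  using assms by (intro eq_matI) (auto simp: blockB_def)

lemma blockB_eigenvector_of_blockA:
  assumes a12: "a12 \<noteq> 0" and dims: "x \<in> carrier_vec k" "y \<in> carrier_vec k" "R \<in> carrier_mat k k"
    and t: "t \<in> carrier_vec k"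
    and eigen: "blockA (Suc (Suc k)) a12 a21 x y R *\<^sub>v vCons a (vCons b t) = lam \<cdot>\<^sub>v vCons a (vCons b t)"
  shows "blockB (Suc (Suc k)) lam a12 a21 x y R *\<^sub>v vCons a t = lam \<cdot>\<^sub>v vCons a t"
proof -
  from eigen have "a12 * b = lam * a" and "a21 * a + y \<bullet> t = lam * b"
    and "a \<cdot>\<^sub>v x + R *\<^sub>v t = lam \<cdot>\<^sub>v t"
    using dims t by (simp_all add: blockA_mult_vCons)
  moreover from this(1) have "b = lam * a / a12"
    using a12 by (simp add: field_simps)
  ultimately show ?thesis
    using dims t a12 by (simp add: blockB_mult_vCons field_simps power2_eq_square)
qed

lemma blockA_eigenvector_of_blockB:
  assumes a12: "a12 \<noteq> 0" and dims: "x \<in> carrier_vec k" "y \<in> carrier_vec k" "R \<in> carrier_mat k k"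
    and t: "t \<in> carrier_vec k"
    and eigen: "blockB (Suc (Suc k)) lam a12 a21 x y R *\<^sub>v vCons a t = lam \<cdot>\<^sub>v vCons a t"
  shows "blockA (Suc (Suc k)) a12 a21 x y R *\<^sub>v vCons a (vCons (lam * a / a12) t)
    = lam \<cdot>\<^sub>v vCons a (vCons (lam * a / a12) t)"
proof -
  from eigen have "(lam + a21 - lam\<^sup>2 / a12) * a + y \<bullet> t = lam * a"
    and "a \<cdot>\<^sub>v x + R *\<^sub>v t = lam \<cdot>\<^sub>v t"
    using dims t by (simp_all add: blockB_mult_vCons)
  then show ?thesis
    using dims t a12 by (simp add: blockA_mult_vCons field_simps power2_eq_square)
qed

text \<open>Swapping the first two coordinates turns \<open>A\<^sup>T\<close> into the matrix of the same shape built
  from \<open>y\<close>, \<open>x\<close> and \<open>R\<^sup>T\<close>, whose companion \<open>B\<close> is \<open>B\<^sup>T\<close>.\<close>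
lemma transpose_blockB_eigenvector_of_blockA:
  assumes a12: "a12 \<noteq> 0" and dims: "x \<in> carrier_vec k" "y \<in> carrier_vec k" "R \<in> carrier_mat k k"
    and s: "s \<in> carrier_vec k"
    and eigen: "transpose_mat (blockA (Suc (Suc k)) a12 a21 x y R) *\<^sub>v vCons a (vCons b s)
      = lam \<cdot>\<^sub>v vCons a (vCons b s)"
  shows "transpose_mat (blockB (Suc (Suc k)) lam a12 a21 x y R) *\<^sub>v vCons b s = lam \<cdot>\<^sub>v vCons b s"
proof -
  have R: "transpose_mat R \<in> carrier_mat k k"
    using dims(3) by simp
  have "blockA (Suc (Suc k)) a12 a21 y x (transpose_mat R) *\<^sub>v vCons b (vCons a s)
      = lam \<cdot>\<^sub>v vCons b (vCons a s)"
    using eigen dims s R by (auto simp: transpose_blockA_mult_vCons blockA_mult_vCons)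
  then show ?thesis
    using blockB_eigenvector_of_blockA[OF a12 dims(2,1) R s] transpose_blockB[of R "Suc (Suc k)"] dims(3)
    by simp
qed

lemma scalar_prod_pos:
  fixes v w :: "'a :: linordered_semidom vec"
  assumes "v \<in> carrier_vec n" "w \<in> carrier_vec n" "0 < n"
    and "\<And>i. i < n \<Longrightarrow> 0 < v $ i" "\<And>i. i < n \<Longrightarrow> 0 < w $ i"
  shows "0 < v \<bullet> w"
  using assms unfolding scalar_prod_def by (intro sum_pos) auto

lemma blockB_order_char_poly_eq_1:
  assumes a12: "a12 \<noteq> 0" and dims: "x \<in> carrier_vec k" "y \<in> carrier_vec k" "R \<in> carrier_mat k k"
    and t: "t \<in> carrier_vec k" and s: "s \<in> carrier_vec k"
    and simple: "order lam (char_poly (blockA (Suc (Suc k)) a12 a21 x y R)) = 1"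
    and u0: "u0 \<noteq> 0"
    and Au: "blockA (Suc (Suc k)) a12 a21 x y R *\<^sub>v vCons u0 (vCons u1 t)
      = lam \<cdot>\<^sub>v vCons u0 (vCons u1 t)"
    and Bz: "transpose_mat (blockB (Suc (Suc k)) lam a12 a21 x y R) *\<^sub>v vCons z0 s = lam \<cdot>\<^sub>v vCons z0 s"
    and zw: "vCons z0 s \<bullet> vCons u0 t \<noteq> 0"
  shows "order lam (char_poly (blockB (Suc (Suc k)) lam a12 a21 x y R)) = 1"
proof (rule order_char_poly_eq_1I[OF _ _ _ _ _ Bz zw])
  show "blockB (Suc (Suc k)) lam a12 a21 x y R \<in> carrier_mat (Suc k) (Suc k)"
    by (simp add: blockB_def)
  show "blockB (Suc (Suc k)) lam a12 a21 x y R *\<^sub>v vCons u0 t = lam \<cdot>\<^sub>v vCons u0 t"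
    by (rule blockB_eigenvector_of_blockA[OF a12 dims t Au])
next
  fix q
  assume q: "q \<in> carrier_vec (Suc k)"
    and Bq: "blockB (Suc (Suc k)) lam a12 a21 x y R *\<^sub>v q = lam \<cdot>\<^sub>v q"
  have A: "blockA (Suc (Suc k)) a12 a21 x y R \<in> carrier_mat (Suc (Suc k)) (Suc (Suc k))"
    by (simp add: blockA_def)
  define r where "r = vec k (\<lambda>i. q $ Suc i)"
  have r: "r \<in> carrier_vec k" and q_eq: "q = vCons (q $ 0) r"
    using vCons_head_tail[OF q] by (auto simp: r_def)
  have "blockB (Suc (Suc k)) lam a12 a21 x y R *\<^sub>v vCons (q $ 0) r = lam \<cdot>\<^sub>v vCons (q $ 0) r"
    using Bq unfolding q_eq[symmetric] .
  then have "blockA (Suc (Suc k)) a12 a21 x y R *\<^sub>v vCons (q $ 0) (vCons (lam * q $ 0 / a12) r)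
    = lam \<cdot>\<^sub>v vCons (q $ 0) (vCons (lam * q $ 0 / a12) r)"
    by (rule blockA_eigenvector_of_blockB[OF a12 dims r])
  then have "\<exists>c. vCons (q $ 0) (vCons (lam * q $ 0 / a12) r) = c \<cdot>\<^sub>v vCons u0 (vCons u1 t)"
    by (intro eigenvector_in_span_if_order_1[OF A _ _ Au simple]) (use u0 r t in simp_all)
  then obtain c where "vCons (q $ 0) (vCons (lam * q $ 0 / a12) r) = c \<cdot>\<^sub>v vCons u0 (vCons u1 t)" ..
  then have "vCons (q $ 0) r = c \<cdot>\<^sub>v vCons u0 t"
    by simp
  then show "\<exists>c. q = c \<cdot>\<^sub>v vCons u0 t"
    by (subst q_eq) blast
qed (use u0 t s in auto)

theorem lemma3p13:
  fixes n :: nat and a12 a21 lam :: real and x y u v :: "real vec" and R :: "real mat"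
  assumes "n \<ge> 2"
    and "a12 \<noteq> 0"
    and "dim_vec x = n - 2" and "dim_vec y = n - 2"
    and "R \<in> carrier_mat (n - 2) (n - 2)"
    and "simple_eigenvalue (blockA n a12 a21 x y R) lam"
    and "dim_vec u = n" and "\<forall>i<n. u $ i > 0"
    and "dim_vec v = n" and "\<forall>i<n. v $ i > 0"
    and "blockA n a12 a21 x y R *\<^sub>v u = lam \<cdot>\<^sub>v u"
    and "transpose_mat (blockA n a12 a21 x y R) *\<^sub>v v = lam \<cdot>\<^sub>v v"
  shows "simple_eigenvalue (blockB n lam a12 a21 x y R) lam
    \<and> blockB n lam a12 a21 x y R *\<^sub>v vec (n - 1) (\<lambda>i. if i = 0 then u $ 0 else u $ (i + 1))
        = lam \<cdot>\<^sub>v vec (n - 1) (\<lambda>i. if i = 0 then u $ 0 else u $ (i + 1))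
    \<and> transpose_mat (blockB n lam a12 a21 x y R) *\<^sub>v vec (n - 1) (\<lambda>i. if i = 0 then v $ 1 else v $ (i + 1))
        = lam \<cdot>\<^sub>v vec (n - 1) (\<lambda>i. if i = 0 then v $ 1 else v $ (i + 1))"
proof -
  obtain k where n: "n = Suc (Suc k)"
    using assms(1) by (metis add_2_eq_Suc le_Suc_ex)
  define t where "t = vec k (\<lambda>i. u $ Suc (Suc i))"
  define s where "s = vec k (\<lambda>i. v $ Suc (Suc i))"
  have dims: "x \<in> carrier_vec k" "y \<in> carrier_vec k" "R \<in> carrier_mat k k"
    "t \<in> carrier_vec k" "s \<in> carrier_vec k"
    using assms(3-5) unfolding n t_def s_def by (auto intro: carrier_vecI)
  have u: "u = vCons (u $ 0) (vCons (u $ 1) t)" and v: "v = vCons (v $ 0) (vCons (v $ 1) s)"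
    using vCons_head_tail[of u "Suc k"] vCons_head_tail[of v "Suc k"] assms(7,9)
    unfolding n t_def s_def by (auto intro: carrier_vecI simp: vec_Suc o_def)
  have w: "vec (n - 1) (\<lambda>i. if i = 0 then u $ 0 else u $ (i + 1)) = vCons (u $ 0) t"
    and z: "vec (n - 1) (\<lambda>i. if i = 0 then v $ 1 else v $ (i + 1)) = vCons (v $ 1) s"
    unfolding n t_def s_def by (auto intro!: eq_vecI simp: vec_index_vCons)
  have Au: "blockA (Suc (Suc k)) a12 a21 x y R *\<^sub>v vCons (u $ 0) (vCons (u $ 1) t)
      = lam \<cdot>\<^sub>v vCons (u $ 0) (vCons (u $ 1) t)"
    using assms(11) unfolding n u[symmetric] .
  have "transpose_mat (blockA (Suc (Suc k)) a12 a21 x y R) *\<^sub>v vCons (v $ 0) (vCons (v $ 1) s)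
      = lam \<cdot>\<^sub>v vCons (v $ 0) (vCons (v $ 1) s)"
    using assms(12) unfolding n v[symmetric] .
  then have Bz: "transpose_mat (blockB (Suc (Suc k)) lam a12 a21 x y R) *\<^sub>v vCons (v $ 1) s
      = lam \<cdot>\<^sub>v vCons (v $ 1) s"
    by (rule transpose_blockB_eigenvector_of_blockA[OF assms(2) dims(1-3,5)])
  have "0 < vCons (v $ 1) s \<bullet> vCons (u $ 0) t"
    unfolding w[symmetric] z[symmetric] using assms(8,10) n
    by (intro scalar_prod_pos[of _ "n - 1"]) auto
  then have "order lam (char_poly (blockB (Suc (Suc k)) lam a12 a21 x y R)) = 1"
    using blockB_order_char_poly_eq_1[OF assms(2) dims _ _ Au Bz] assms(6) assms(8)[rule_format, of 0]
    unfolding simple_eigenvalue_def n by simp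
  then show ?thesis
    using blockB_eigenvector_of_blockA[OF assms(2) dims(1-4) Au] Bz
    unfolding simple_eigenvalue_def w z unfolding n by simp
qed

end
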